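(* Let $K$ be a real biquadratic field with quadratic subfields $k_1,k_2,k_3$ whose fundamental units $\epsilon_1,\epsilon_2,\epsilon_3$ all have norm $-1$ (to $\mathbb{Q}$). Let $E_K$ be the unit group of $K$. Then (1) $E_K=\langle -1,\epsilon_1,\epsilon_2,\epsilon_3\rangle$ if and only if the unit signature rank of $K$ is $3$; equivalently, (2) $E_K=\langle -1,\epsilon_1,\epsilon_2,\sqrt{\epsilon_1\epsilon_2\epsilon_3}\rangle$ if and only if the unit signature rank of $K$ is $4$.
   Context: For a totally real field $F$ of degree $n$ and $0\neq\alpha\in F$, the signature of $\alpha$ is the vector in $\mathbb{F}_2^n$ whose entry at a real embedding $v$ is $0$ if $v(\alpha)>0$ and $1$ if $v(\alpha)<0$. The signatures of the units of $F$ form a subspace of $\mathbb{F}_2^n$ (the unit signature group); its dimension is the unit signature rank of $F$, and the deficiency $\delta(F)$ is $n$ minus the unit signature rank. *)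

theory Defs
  imports "HOL-Analysis.Analysis" "HOL-Library.Z2" "HOL-Library.Function_Algebras" "HOL-Computational_Algebra.Polynomial"
begin

text \<open>Number fields are realised concretely as subsets of the reals.\<close>

definition is_int_square :: "int \<Rightarrow> bool" where
  "is_int_square d \<longleftrightarrow> (\<exists>k::int. d = k ^ 2)"

definition real_biquadratic :: "int \<Rightarrow> int \<Rightarrow> bool" where
  "real_biquadratic m n \<longleftrightarrow> m > 0 \<and> n > 0 \<and> \<not> is_int_square m \<and> \<not> is_int_square n
      \<and> \<not> is_int_square (m * n)"

definition biquad_field :: "int \<Rightarrow> int \<Rightarrow> real set" where
  "biquad_field m n = {of_rat a + of_rat b * sqrt (of_int m) + of_rat c * sqrt (of_int n)
      + of_rat d * sqrt (of_int (m * n)) | a b c d. True}"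

definition quad_field :: "int \<Rightarrow> real set" where
  "quad_field d = {of_rat a + of_rat b * sqrt (of_int d) | a b. True}"

definition quad_conj :: "int \<Rightarrow> real \<Rightarrow> real" where
  "quad_conj d x = (THE y. \<exists>a b. x = of_rat a + of_rat b * sqrt (of_int d)
                              \<and> y = of_rat a - of_rat b * sqrt (of_int d))"

definition quad_norm :: "int \<Rightarrow> real \<Rightarrow> real" where
  "quad_norm d x = x * quad_conj d x"

definition algebraic_int :: "real \<Rightarrow> bool" where
  "algebraic_int x \<longleftrightarrow> (\<exists>p :: int poly. lead_coeff p = 1 \<and> poly (map_poly of_int p) x = 0)"

definition units_of :: "real set \<Rightarrow> real set" where
  "units_of F = {u \<in> F. u \<noteq> 0 \<and> algebraic_int u \<and> algebraic_int (inverse u)}"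

definition fundamental_unit :: "int \<Rightarrow> real \<Rightarrow> bool" where
  "fundamental_unit d \<epsilon> \<longleftrightarrow> \<epsilon> \<in> units_of (quad_field d) \<and> \<epsilon> > 1 \<and>
     units_of (quad_field d) = {s * \<epsilon> powi k | s k. s \<in> {1, -1}}"

definition real_embeddings :: "real set \<Rightarrow> (real \<Rightarrow> real) set" where
  "real_embeddings F = {\<sigma>. (\<forall>x\<in>F. \<forall>y\<in>F. \<sigma> (x + y) = \<sigma> x + \<sigma> y \<and> \<sigma> (x * y) = \<sigma> x * \<sigma> y)
       \<and> \<sigma> 1 = 1 \<and> (\<forall>x. x \<notin> F \<longrightarrow> \<sigma> x = 0)}"

definition signature :: "real set \<Rightarrow> real \<Rightarrow> ((real \<Rightarrow> real) \<Rightarrow> bit)" where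
  "signature F \<alpha> = (\<lambda>\<sigma>. if \<sigma> \<in> real_embeddings F \<and> \<sigma> \<alpha> < 0 then 1 else 0)"

definition f2_scale :: "bit \<Rightarrow> ('a \<Rightarrow> bit) \<Rightarrow> ('a \<Rightarrow> bit)" where
  "f2_scale c v = (\<lambda>x. c * v x)"

lemma f2_vector_space: "vector_space (f2_scale :: bit \<Rightarrow> ('a \<Rightarrow> bit) \<Rightarrow> _)"
  by unfold_locales (simp_all only: f2_scale_def fun_eq_iff plus_fun_def distrib_left distrib_right
      mult.assoc mult_1_left refl simp_thms allI)

definition unit_signature_rank :: "real set \<Rightarrow> nat" where
  "unit_signature_rank F = vector_space.dim f2_scale (signature F ` units_of F)"

definition gen4 :: "real \<Rightarrow> real \<Rightarrow> real \<Rightarrow> real \<Rightarrow> real set" where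
  "gen4 a b c d = {a powi i * b powi j * c powi k * d powi l | i j k l. True}"

end

(*
  Let emb p q (p, q boolean) be the four real embeddings of K = Q(sqrt m, sqrt n), emb p q
  negating sqrt m iff p and sqrt n iff q. As N(e_i) = -1, every embedding either fixes e_i or
  maps it to -1/e_i. For a unit u the relative norms u * emb p q u to the three quadratic
  subfields are units there, i.e. plus or minus powers of e1, e2, e3, and their product is
  u^2 N(u). Hence u^2 = s e1^k1 e2^k2 e3^k3, and evaluating the totally positive u^2 at the four
  embeddings gives s = 1 and k1, k2, k3 of equal parity. Consequently the unit group is
  <-1, e1, e2, e3> if eta = sqrt (e1 e2 e3) is not in K and <-1, e1, e2, eta> if it is.

  On signatures, those of -1, e1, e2 are independent, while e1 e2 e3 is totally positive, so the
  signature of e3 is the sum of those of e1 and e2: the first group has signature rank 3. Since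
  N(eta) = -1, eta is negative at an odd number of embeddings, whereas -1, e1, e2 are negative at
  an even number; so the signature of eta is independent of the others and the second group has
  signature rank 4.
*)

theory Submission
  imports Defs "Jordan_Normal_Form.Char_Poly"
begin

hide_const (open) Group.units_of

section \<open>Integer spans and algebraic integers\<close>

definition int_span :: "'a :: comm_ring_1 set \<Rightarrow> 'a set" where
  "int_span G = {s. \<exists>c::'a \<Rightarrow> int. s = (\<Sum>g\<in>G. of_int (c g) * g)}"

lemma int_span_base: assumes "finite G" "g \<in> G" shows "g \<in> int_span G"
proof -
  have "(\<Sum>h\<in>G. of_int (if h = g then 1 else 0) * h) = g"
    using assms by (simp add: if_distrib if_distribR sum.delta cong: if_cong)
  thus ?thesis unfolding int_span_def by (intro CollectI exI[of _ "\<lambda>h. if h = g then 1 else 0"]) simp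
qed

lemma int_span_0: "0 \<in> int_span G"
  unfolding int_span_def by (intro CollectI exI[of _ "\<lambda>_. 0"]) simp

lemma int_span_add: assumes "s \<in> int_span G" "t \<in> int_span G" shows "s + t \<in> int_span G"
proof -
  obtain c d where "s = (\<Sum>g\<in>G. of_int (c g) * g)" "t = (\<Sum>g\<in>G. of_int (d g) * g)"
    using assms unfolding int_span_def by auto
  hence "s + t = (\<Sum>g\<in>G. of_int (c g + d g) * g)"
    by (simp add: sum.distrib distrib_right)
  thus ?thesis unfolding int_span_def by (intro CollectI exI[of _ "\<lambda>g. c g + d g"])
qed

lemma int_span_scale: assumes "s \<in> int_span G" shows "of_int k * s \<in> int_span G"
proof -
  obtain c where "s = (\<Sum>g\<in>G. of_int (c g) * g)"
    using assms unfolding int_span_def by auto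
  hence "of_int k * s = (\<Sum>g\<in>G. of_int (k * c g) * g)"
    by (simp add: sum_distrib_left mult.assoc)
  thus ?thesis unfolding int_span_def by (intro CollectI exI[of _ "\<lambda>g. k * c g"])
qed

lemma int_span_sum: assumes "finite I" "\<And>i. i \<in> I \<Longrightarrow> f i \<in> int_span G"
  shows "(\<Sum>i\<in>I. f i) \<in> int_span G"
  using assms by (induction I rule: finite_induct) (auto intro: int_span_0 int_span_add)

lemma int_span_mult: assumes "finite A" "s \<in> int_span A" "\<And>a. a \<in> A \<Longrightarrow> a * t \<in> int_span G"
  shows "s * t \<in> int_span G"
proof -
  obtain c where "s = (\<Sum>a\<in>A. of_int (c a) * a)"
    using assms unfolding int_span_def by auto
  hence "s * t = (\<Sum>a\<in>A. of_int (c a) * (a * t))"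
    by (simp add: sum_distrib_right mult.assoc)
  also have "\<dots> \<in> int_span G" using assms by (intro int_span_sum int_span_scale) auto
  finally show ?thesis .
qed

lemma algebraic_int_if_eigenvalue_int_mat:
  fixes z :: "'a :: field_char_0"
  assumes A: "A \<in> carrier_mat N N" and z: "eigenvalue (map_mat of_int A :: 'a mat) z"
  shows "Polynomial.algebraic_int z"
proof -
  have "map_mat of_int A \<in> carrier_mat N N" using A by simp
  hence "poly (char_poly (map_mat of_int A :: 'a mat)) z = 0"
    using eigenvalue_root_char_poly z by blast
  moreover have "char_poly (map_mat of_int A :: 'a mat) = of_int_poly (char_poly A)"
    using of_int_hom.char_poly_hom[OF A] by simp
  moreover have "lead_coeff (char_poly A) = 1" using degree_monic_char_poly[OF A] by simp
  ultimately show ?thesis unfolding algebraic_int_altdef_ipoly by auto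
qed

lemma algebraic_int_if_int_span_stable:
  fixes z :: "'a :: field_char_0"
  assumes fin: "finite G" and nz: "g0 \<in> G" "g0 \<noteq> 0" and stable: "\<And>g. g \<in> G \<Longrightarrow> z * g \<in> int_span G"
  shows "Polynomial.algebraic_int z"
proof -
  obtain gs where gs: "distinct gs" "set gs = G" using finite_distinct_list[OF fin] by auto
  define N where "N = length gs"
  have sum_G: "(\<Sum>g\<in>G. f g) = (\<Sum>l\<in>{0..<N}. f (gs ! l))" for f :: "'a \<Rightarrow> 'a"
  proof -
    have "(\<Sum>g\<in>G. f g) = sum_list (map f gs)" using gs by (simp add: sum_list_distinct_conv_sum_set)
    thus ?thesis unfolding N_def by (simp add: sum_list_sum_nth)
  qed
  have "\<forall>k\<in>{0..<N}. \<exists>c::'a\<Rightarrow>int. z * gs ! k = (\<Sum>g\<in>G. of_int (c g) * g)"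
    using stable gs unfolding int_span_def N_def by auto
  then obtain C where C: "\<And>k. k < N \<Longrightarrow> z * gs ! k = (\<Sum>g\<in>G. of_int (C k g) * g)"
    by (metis atLeastLessThan_iff zero_le bchoice)
  define A :: "int mat" where "A = mat N N (\<lambda>(k,l). C k (gs ! l))"
  define A' :: "'a mat" where "A' = map_mat of_int A"
  define v :: "'a Matrix.vec" where "v = Matrix.vec N (\<lambda>k. gs ! k)"
  have A: "A \<in> carrier_mat N N" unfolding A_def by simp
  have A': "A' \<in> carrier_mat N N" unfolding A'_def A_def by simp
  have "eigenvector A' v z" unfolding eigenvector_def
  proof (intro conjI)
    show "v \<in> carrier_vec (dim_row A')" using A' unfolding v_def by simp
    obtain k where k: "k < N" "gs ! k = g0" using nz gs unfolding N_def by (metis in_set_conv_nth)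
    show "v \<noteq> 0\<^sub>v (dim_row A')"
    proof
      assume "v = 0\<^sub>v (dim_row A')"
      hence "v $ k = 0" using A' k by simp
      thus False using k nz unfolding v_def by simp
    qed
    show "A' *\<^sub>v v = z \<cdot>\<^sub>v v"
    proof (rule eq_vecI)
      fix k assume "k < dim_vec (z \<cdot>\<^sub>v v)"
      hence k: "k < N" unfolding v_def by simp
      have "(A' *\<^sub>v v) $ k = (\<Sum>l\<in>{0..<N}. of_int (C k (gs ! l)) * gs ! l)"
        using k unfolding A'_def A_def v_def by (simp add: scalar_prod_def)
      also have "\<dots> = z * gs ! k" using C[OF k] sum_G by simp
      finally show "(A' *\<^sub>v v) $ k = (z \<cdot>\<^sub>v v) $ k" using k unfolding v_def by simp
    qed (use A' in \<open>simp add: v_def\<close>)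
  qed
  thus ?thesis using algebraic_int_if_eigenvalue_int_mat[OF A] unfolding eigenvalue_def A'_def by blast
qed

lemma power_in_int_span_lower_powers:
  fixes x :: "'a :: field_char_0"
  assumes p: "lead_coeff p = 1" "poly (of_int_poly p) x = 0"
  shows "x ^ i \<in> int_span ((\<lambda>j. x ^ j) ` {..<degree p})"
proof (induction i rule: less_induct)
  case (less i)
  define d where "d = degree p"
  show ?case
  proof (cases "i < d")
    case True thus ?thesis unfolding d_def by (intro int_span_base) auto
  next
    case False
    have "0 = (\<Sum>j\<le>d. of_int (coeff p j) * x ^ j)"
      using p(2) unfolding poly_altdef d_def by (simp add: degree_map_poly coeff_map_poly)
    also have "\<dots> = (\<Sum>j<d. of_int (coeff p j) * x ^ j) + x ^ d"
      using p(1) unfolding d_def by (simp add: lessThan_Suc_atMost[symmetric])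
    finally have x_d: "x ^ d = - (\<Sum>j<d. of_int (coeff p j) * x ^ j)"
      by (simp add: eq_neg_iff_add_eq_0 add.commute)
    have "x ^ i = x ^ (i - d) * x ^ d" using False by (simp add: power_add[symmetric])
    also have "\<dots> = (\<Sum>j<d. of_int (- coeff p j) * x ^ (i - d + j))"
      unfolding x_d by (simp add: sum_distrib_left power_add sum_negf algebra_simps)
    also have "\<dots> \<in> int_span ((\<lambda>j. x ^ j) ` {..<degree p})"
    proof (intro int_span_sum int_span_scale)
      fix j assume "j \<in> {..<d}"
      hence "i - d + j < i" using False by auto
      thus "x ^ (i - d + j) \<in> int_span ((\<lambda>j. x ^ j) ` {..<degree p})" by (rule less.IH)
    qed simp
    finally show ?thesis .
  qed
qed

lemma degree_pos_if_monic_root: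
  fixes x :: "'a :: field_char_0"
  assumes "poly (of_int_poly p) x = 0" "lead_coeff p = 1"
  shows "degree p > 0"
proof (rule ccontr)
  assume "\<not> degree p > 0"
  then obtain a where "p = [:a:]" by (auto elim: degree_eq_zeroE)
  with assms show False by simp
qed

text \<open>The monomials x^i y^j with i, j below the degrees of the minimal equations of x and y
  span a finitely generated Z-module that is stable under multiplication by x y.\<close>
lemma algebraic_int_mult:
  fixes x y :: "'a :: field_char_0"
  assumes "Polynomial.algebraic_int x" "Polynomial.algebraic_int y"
  shows "Polynomial.algebraic_int (x * y)"
proof -
  obtain p where p: "poly (of_int_poly p) x = 0" "lead_coeff p = 1"
    using assms(1) unfolding algebraic_int_altdef_ipoly by auto
  obtain q where q: "poly (of_int_poly q) y = 0" "lead_coeff q = 1"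
    using assms(2) unfolding algebraic_int_altdef_ipoly by auto
  define X where "X = (\<lambda>i. x ^ i) ` {..<degree p}"
  define Y where "Y = (\<lambda>j. y ^ j) ` {..<degree q}"
  define G where "G = (\<lambda>(i, j). x ^ i * y ^ j) ` ({..<degree p} \<times> {..<degree q})"
  have fin: "finite X" "finite Y" "finite G" unfolding X_def Y_def G_def by simp_all
  have monomial: "x ^ i * y ^ j \<in> int_span G" for i j
  proof (rule int_span_mult[OF fin(1)])
    show "x ^ i \<in> int_span X" unfolding X_def by (rule power_in_int_span_lower_powers[OF p(2,1)])
    fix a assume "a \<in> X"
    then obtain i' where i': "i' < degree p" "a = x ^ i'" unfolding X_def by auto
    have "y ^ j * a \<in> int_span G"
    proof (rule int_span_mult[OF fin(2)])
      show "y ^ j \<in> int_span Y" unfolding Y_def by (rule power_in_int_span_lower_powers[OF q(2,1)])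
      fix b assume "b \<in> Y"
      then obtain j' where j': "j' < degree q" "b = y ^ j'" unfolding Y_def by auto
      have "b * a \<in> G" unfolding G_def
        using i' j' by (intro image_eqI[where x = "(i', j')"]) (auto simp: mult.commute)
      thus "b * a \<in> int_span G" by (rule int_span_base[OF fin(3)])
    qed
    thus "a * y ^ j \<in> int_span G" by (simp add: mult.commute)
  qed
  have "1 \<in> G" unfolding G_def
    using degree_pos_if_monic_root[OF p] degree_pos_if_monic_root[OF q] by (intro image_eqI[where x = "(0, 0)"]) auto
  moreover have "x * y * g \<in> int_span G" if "g \<in> G" for g
    using that monomial[of "Suc _" "Suc _"] unfolding G_def by (auto simp: algebra_simps)
  ultimately show ?thesis
    using algebraic_int_if_int_span_stable[OF fin(3)] by fastforce
qed

lemma algebraic_int_real_iff: "algebraic_int x \<longleftrightarrow> Polynomial.algebraic_int x"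
  unfolding algebraic_int_def algebraic_int_altdef_ipoly by blast

section \<open>Quadratic irrationalities\<close>

lemma is_int_square_if_rational_sqrt:
  fixes r :: real
  assumes "r \<in> \<rat>" "r ^ 2 = of_int k"
  shows "is_int_square k"
proof -
  have "poly (of_int_poly [:-k, 0, 1:]) r = 0" using assms(2) by (simp add: power2_eq_square)
  moreover have "lead_coeff [:-k, 0, 1:] = 1" by simp
  ultimately have "Polynomial.algebraic_int r" unfolding algebraic_int_altdef_ipoly by blast
  then obtain j where "r = of_int j" using rational_algebraic_int_is_int assms(1) by (auto elim: Ints_cases)
  hence "of_int k = (of_int (j ^ 2) :: real)" using assms(2) by simp
  hence "k = j ^ 2" by linarith
  thus ?thesis unfolding is_int_square_def by blast
qed

lemma rational_sqrt_combination_eq_0: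
  fixes a b :: real
  assumes "k \<ge> 0" "\<not> is_int_square k" "a \<in> \<rat>" "b \<in> \<rat>" "a + b * sqrt (of_int k) = 0"
  shows "a = 0 \<and> b = 0"
proof (cases "b = 0")
  case True thus ?thesis using assms by simp
next
  case False
  hence "sqrt (of_int k) = - a / b" using assms(5) by (simp add: field_simps add_eq_0_iff)
  hence "sqrt (of_int k) \<in> \<rat>" using assms(3,4) by simp
  hence "is_int_square k" using assms(1) by (intro is_int_square_if_rational_sqrt) auto
  thus ?thesis using assms(2) by simp
qed

lemma quad_conj_eq:
  assumes "k \<ge> 0" "\<not> is_int_square k"
  shows "quad_conj k (of_rat a + of_rat b * sqrt (of_int k)) = of_rat a - of_rat b * sqrt (of_int k)"
  unfolding quad_conj_def
proof (rule the_equality)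
  show "\<exists>a' b'. of_rat a + of_rat b * sqrt (of_int k) = of_rat a' + of_rat b' * sqrt (of_int k) \<and>
      of_rat a - of_rat b * sqrt (of_int k) = of_rat a' - of_rat b' * sqrt (of_int k)" by blast
next
  fix y assume "\<exists>a' b'. of_rat a + of_rat b * sqrt (of_int k) = of_rat a' + of_rat b' * sqrt (of_int k) \<and>
      y = of_rat a' - of_rat b' * sqrt (of_int k)"
  then obtain a' b' where eq: "of_rat a + of_rat b * sqrt (of_int k) = of_rat a' + of_rat b' * sqrt (of_int k)"
    and y: "y = of_rat a' - of_rat b' * sqrt (of_int k)" by blast
  from eq have "(of_rat a - of_rat a') + (of_rat b - of_rat b') * sqrt (of_int k) = (0::real)"
    by (simp add: algebra_simps)
  hence "of_rat a - of_rat a' = (0::real) \<and> of_rat b - of_rat b' = (0::real)"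
    by (intro rational_sqrt_combination_eq_0[OF assms]) auto
  thus "y = of_rat a - of_rat b * sqrt (of_int k)" using y by simp
qed

section \<open>Real embeddings and signatures\<close>

lemma real_embedding_add: "\<sigma> \<in> real_embeddings F \<Longrightarrow> x \<in> F \<Longrightarrow> y \<in> F \<Longrightarrow> \<sigma> (x + y) = \<sigma> x + \<sigma> y"
  and real_embedding_mult: "\<sigma> \<in> real_embeddings F \<Longrightarrow> x \<in> F \<Longrightarrow> y \<in> F \<Longrightarrow> \<sigma> (x * y) = \<sigma> x * \<sigma> y"
  and real_embedding_1: "\<sigma> \<in> real_embeddings F \<Longrightarrow> \<sigma> 1 = 1"
  unfolding real_embeddings_def by blast+

lemma real_embedding_of_rat:
  assumes \<sigma>: "\<sigma> \<in> real_embeddings F" and rat: "\<rat> \<subseteq> F"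
  shows "\<sigma> (of_rat r) = of_rat r"
proof -
  have "of_rat x \<in> F" for x using rat by (auto intro: Rats_of_rat)
  hence add: "\<sigma> (of_rat x + of_rat y) = \<sigma> (of_rat x) + \<sigma> (of_rat y)"
    and mult: "\<sigma> (of_rat x * of_rat y) = \<sigma> (of_rat x) * \<sigma> (of_rat y)" for x y
    using real_embedding_add[OF \<sigma>] real_embedding_mult[OF \<sigma>] by blast+
  have one: "\<sigma> 1 = 1" using real_embedding_1[OF \<sigma>] .
  have zero: "\<sigma> 0 = 0" using add[of 0 0] by simp
  have of_nat: "\<sigma> (of_nat k) = of_nat k" for k
  proof (induction k)
    case (Suc k)
    thus ?case using add[of "of_nat k" 1] one by (simp add: add.commute)
  qed (simp add: zero)
  have of_int: "\<sigma> (of_int k) = of_int k" for k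
  proof (cases "k \<ge> 0")
    case True thus ?thesis using of_nat[of "nat k"] by simp
  next
    case False
    have "\<sigma> (of_int k) + \<sigma> (of_int (- k)) = \<sigma> (of_int k + of_int (- k))"
      using add[of "of_int k" "of_int (- k)"] by (simp only: of_rat_of_int_eq)
    also have "\<dots> = 0" using zero by simp
    finally show ?thesis using of_nat[of "nat (- k)"] False by simp
  qed
  obtain a b where ab: "quotient_of r = (a, b)" by (cases "quotient_of r")
  have b: "b > 0" and r: "r = of_int a / of_int b"
    using quotient_of_denom_pos[OF ab] quotient_of_div[OF ab] by simp_all
  have "\<sigma> (of_rat r) * of_int b = of_int a"
    using mult[of r "of_int b"] of_int[of a] of_int[of b] b unfolding r by (simp add: of_rat_divide)
  thus ?thesis unfolding r using b by (simp add: of_rat_divide field_simps)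
qed

lemma real_embedding_mult_inverse:
  assumes "\<sigma> \<in> real_embeddings F" "x \<in> F" "inverse x \<in> F" "x \<noteq> 0"
  shows "\<sigma> x * \<sigma> (inverse x) = 1"
proof -
  have "\<sigma> x * \<sigma> (inverse x) = \<sigma> (x * inverse x)"
    using real_embedding_mult[OF assms(1-3)] by simp
  also have "\<dots> = 1" using assms(4) real_embedding_1[OF assms(1)] by simp
  finally show ?thesis .
qed

lemma real_embedding_inverse:
  assumes "\<sigma> \<in> real_embeddings F" "x \<in> F" "inverse x \<in> F" "x \<noteq> 0"
  shows "\<sigma> (inverse x) = inverse (\<sigma> x)"
  using real_embedding_mult_inverse[OF assms] by (simp add: inverse_unique)

lemma real_embedding_nonzero:
  assumes "\<sigma> \<in> real_embeddings F" "x \<in> F" "inverse x \<in> F" "x \<noteq> 0"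
  shows "\<sigma> x \<noteq> 0"
  using real_embedding_mult_inverse[OF assms] by auto

lemma real_embedding_sqrt_cases:
  assumes \<sigma>: "\<sigma> \<in> real_embeddings F" and rat: "\<rat> \<subseteq> F" and r: "r \<in> F" "r * r = of_rat s"
  shows "\<sigma> r = r \<or> \<sigma> r = - r"
proof -
  have "\<sigma> r * \<sigma> r = \<sigma> (of_rat s)"
    using real_embedding_mult[OF \<sigma> r(1) r(1)] r(2) by simp
  also have "\<dots> = r * r" using real_embedding_of_rat[OF \<sigma> rat] r(2) by simp
  finally have "(\<sigma> r - r) * (\<sigma> r + r) = 0" by (simp add: algebra_simps)
  thus ?thesis by (auto simp: add_eq_0_iff)
qed

definition sign_bit :: "real \<Rightarrow> bit" where
  "sign_bit x = (if x < 0 then 1 else 0)"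

lemma sign_bit_mult: "x \<noteq> 0 \<Longrightarrow> y \<noteq> 0 \<Longrightarrow> sign_bit (x * y) = sign_bit x + sign_bit y"
  unfolding sign_bit_def by (auto simp: mult_less_0_iff)

lemma sign_bit_inverse: "sign_bit (inverse x) = sign_bit x"
  unfolding sign_bit_def by simp

lemma sign_bit_mult4:
  assumes "x \<noteq> 0" "y \<noteq> 0" "z \<noteq> 0" "w \<noteq> 0"
  shows "sign_bit (x * y * z * w) = sign_bit x + sign_bit y + sign_bit z + sign_bit w"
  using assms by (simp only: sign_bit_mult mult_eq_0_iff de_Morgan_disj simp_thms)

lemma signature_real_embedding: "\<sigma> \<in> real_embeddings F \<Longrightarrow> signature F x \<sigma> = sign_bit (\<sigma> x)"
  and signature_outside: "\<sigma> \<notin> real_embeddings F \<Longrightarrow> signature F x \<sigma> = 0"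
  unfolding signature_def sign_bit_def by simp_all

section \<open>Monomial groups and F_2-linear algebra\<close>

lemma power_int_double: "(x :: 'a :: field) powi (2 * a) = (x powi a) ^ 2"
  by (simp add: power_int_mult mult.commute power_int_power)

lemma power_int_double_plus_1: "(x :: 'a :: field) \<noteq> 0 \<Longrightarrow> x powi (2 * a + 1) = x * (x powi a) ^ 2"
  by (simp add: power_int_add power_int_double)

lemma gen4_mult:
  fixes a b c d :: real
  assumes "a \<noteq> 0" "b \<noteq> 0" "c \<noteq> 0" "d \<noteq> 0" "x \<in> gen4 a b c d" "y \<in> gen4 a b c d"
  shows "x * y \<in> gen4 a b c d"
proof -
  obtain i j k l i' j' k' l' where "x = a powi i * b powi j * c powi k * d powi l"
    and "y = a powi i' * b powi j' * c powi k' * d powi l'"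
    using assms(5,6) unfolding gen4_def by blast
  hence "x * y = a powi (i + i') * b powi (j + j') * c powi (k + k') * d powi (l + l')"
    using assms(1-4) by (simp add: power_int_add mult_ac)
  thus ?thesis unfolding gen4_def by blast
qed

lemma gen4_memI: "a powi i * b powi j * c powi k * d powi l \<in> gen4 a b c d"
  unfolding gen4_def by blast

lemma gen4_generators: "a \<in> gen4 a b c d" "b \<in> gen4 a b c d" "c \<in> gen4 a b c d" "d \<in> gen4 a b c d"
  using gen4_memI[of a 1 b 0 c 0 d 0] gen4_memI[of a 0 b 1 c 0 d 0] gen4_memI[of a 0 b 0 c 1 d 0]
    gen4_memI[of a 0 b 0 c 0 d 1] by simp_all

interpretation f2: vector_space "f2_scale :: bit \<Rightarrow> ('a \<Rightarrow> bit) \<Rightarrow> ('a \<Rightarrow> bit)"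
  by (rule f2_vector_space)

lemma f2_span_eval_sum_eq_0:
  assumes "v \<in> f2.span S" "\<And>w. w \<in> S \<Longrightarrow> (\<Sum>\<sigma>\<leftarrow>ts. w \<sigma>) = 0"
  shows "(\<Sum>\<sigma>\<leftarrow>ts. v \<sigma>) = 0"
  using assms(1)
proof (induction rule: f2.span_induct_alt)
  case (step c x y)
  have "(\<Sum>\<sigma>\<leftarrow>ts. (f2_scale c x + y) \<sigma>) = c * (\<Sum>\<sigma>\<leftarrow>ts. x \<sigma>) + (\<Sum>\<sigma>\<leftarrow>ts. y \<sigma>)"
    by (simp only: f2_scale_def plus_fun_apply sum_list_addf sum_list_const_mult)
  thus ?case using assms(2)[OF step(1)] step(2) by simp
qed simp

lemma f2_dim_eq_if_span_eq: "f2.span S = f2.span T \<Longrightarrow> f2.dim S = f2.dim T"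
proof -
  assume "f2.span S = f2.span T"
  hence "f2.dim (f2.span S) = f2.dim (f2.span T)" by simp
  thus ?thesis by simp
qed

section \<open>The biquadratic field\<close>

locale biquadratic =
  fixes m n :: int
  assumes real_biquadratic: "real_biquadratic m n"
begin

abbreviation K :: "real set" where "K \<equiv> biquad_field m n"

lemma m_pos: "m > 0" and n_pos: "n > 0" and m_nonsquare: "\<not> is_int_square m"
  and n_nonsquare: "\<not> is_int_square n" and mn_nonsquare: "\<not> is_int_square (m * n)"
  using real_biquadratic unfolding real_biquadratic_def by auto

definition sqrt_m :: real where "sqrt_m = sqrt (of_int m)"
definition sqrt_n :: real where "sqrt_n = sqrt (of_int n)"

lemma sqrt_m_square: "sqrt_m * sqrt_m = of_int m" and sqrt_n_square: "sqrt_n * sqrt_n = of_int n"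
  using m_pos n_pos unfolding sqrt_m_def sqrt_n_def by auto

lemma sqrt_mn: "sqrt (of_int (m * n)) = sqrt_m * sqrt_n"
  unfolding sqrt_m_def sqrt_n_def by (simp add: real_sqrt_mult)

lemma sqrt_m_combination_eq_0: "a \<in> \<rat> \<Longrightarrow> b \<in> \<rat> \<Longrightarrow> a + b * sqrt_m = 0 \<Longrightarrow> a = 0 \<and> b = 0"
  using rational_sqrt_combination_eq_0[of m a b] m_pos m_nonsquare unfolding sqrt_m_def by auto

text \<open>Squaring forces P = 0 or Q = 0, which would make n or m n a square.\<close>
lemma sqrt_n_not_in_quad_field_m:
  assumes PQ: "P \<in> \<rat>" "Q \<in> \<rat>"
  shows "sqrt_n \<noteq> P + Q * sqrt_m"
proof
  assume sqrt_n_eq: "sqrt_n = P + Q * sqrt_m"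
  have "(P * P + Q * Q * of_int m - of_int n) + (2 * P * Q) * sqrt_m = 0"
    using sqrt_n_square sqrt_m_square unfolding sqrt_n_eq by (simp add: algebra_simps)
  moreover have "P * P + Q * Q * of_int m - of_int n \<in> \<rat>" "2 * P * Q \<in> \<rat>" using PQ by simp_all
  ultimately have "P * P + Q * Q * of_int m - of_int n = 0 \<and> 2 * P * Q = 0"
    using sqrt_m_combination_eq_0 by blast
  hence h: "P * P + Q * Q * of_int m = of_int n" "P = 0 \<or> Q = 0" by auto
  show False
  proof (cases "Q = 0")
    case True
    hence "P ^ 2 = of_int n" using h by (simp add: power2_eq_square)
    thus False using is_int_square_if_rational_sqrt PQ n_nonsquare by blast
  next
    case False
    hence "(Q * of_int m) ^ 2 = of_int (m * n)" using h by (simp add: power2_eq_square algebra_simps)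
    moreover have "Q * of_int m \<in> \<rat>" using PQ by simp
    ultimately show False using is_int_square_if_rational_sqrt mn_nonsquare by blast
  qed
qed

text \<open>If c + d sqrt m \<noteq> 0, multiplying by its conjugate c - d sqrt m solves for sqrt n in
  Q(sqrt m).\<close>
lemma basis_independent:
  assumes q: "a \<in> \<rat>" "b \<in> \<rat>" "c \<in> \<rat>" "d \<in> \<rat>"
    and eq: "a + b * sqrt_m + c * sqrt_n + d * (sqrt_m * sqrt_n) = 0"
  shows "a = 0 \<and> b = 0 \<and> c = 0 \<and> d = 0"
proof (cases "c + d * sqrt_m = 0")
  case True
  hence "c = 0 \<and> d = 0" using sqrt_m_combination_eq_0 q by blast
  moreover from this have "a + b * sqrt_m = 0" using eq by simp
  ultimately show ?thesis using sqrt_m_combination_eq_0 q by blast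
next
  case False
  define N where "N = c * c - d * d * of_int m"
  have conj_prod: "(c + d * sqrt_m) * (c - d * sqrt_m) = N"
    unfolding N_def using sqrt_m_square by (simp add: algebra_simps)
  have "c - d * sqrt_m \<noteq> 0"
    using sqrt_m_combination_eq_0[of c "-d"] q False by auto
  hence N0: "N \<noteq> 0" using conj_prod False by auto
  define A where "A = a * c - b * d * of_int m"
  define B where "B = b * c - a * d"
  have "(c - d * sqrt_m) * ((a + b * sqrt_m) + (c + d * sqrt_m) * sqrt_n) = 0"
    using eq by (simp add: algebra_simps)
  hence "N * sqrt_n = - A - B * sqrt_m"
    unfolding conj_prod[symmetric] A_def B_def using sqrt_m_square by (simp add: algebra_simps)
  hence "sqrt_n = (- A / N) + (- B / N) * sqrt_m" using N0 by (simp add: field_simps)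
  moreover have "- A / N \<in> \<rat>" "- B / N \<in> \<rat>" unfolding A_def B_def N_def using q by simp_all
  ultimately show ?thesis using sqrt_n_not_in_quad_field_m by blast
qed

definition elem :: "rat \<Rightarrow> rat \<Rightarrow> rat \<Rightarrow> rat \<Rightarrow> real" where
  "elem a b c d = of_rat a + of_rat b * sqrt_m + of_rat c * sqrt_n + of_rat d * (sqrt_m * sqrt_n)"

lemma K_eq: "K = {elem a b c d | a b c d. True}"
  unfolding biquad_field_def elem_def sqrt_mn sqrt_m_def[symmetric] sqrt_n_def[symmetric] ..

lemma elem_in_K: "elem a b c d \<in> K"
  unfolding K_eq by blast

lemma K_elemE: assumes "x \<in> K" obtains a b c d where "x = elem a b c d"
  using assms unfolding K_eq by blast

lemma elem_eq_iff: "elem a b c d = elem a' b' c' d' \<longleftrightarrow> a = a' \<and> b = b' \<and> c = c' \<and> d = d'"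
proof
  assume "elem a b c d = elem a' b' c' d'"
  hence "(of_rat a - of_rat a') + (of_rat b - of_rat b') * sqrt_m + (of_rat c - of_rat c') * sqrt_n
     + (of_rat d - of_rat d') * (sqrt_m * sqrt_n) = 0" unfolding elem_def by (simp add: algebra_simps)
  hence "of_rat a - of_rat a' = (0::real) \<and> of_rat b - of_rat b' = (0::real) \<and>
     of_rat c - of_rat c' = (0::real) \<and> of_rat d - of_rat d' = (0::real)"
    by (intro basis_independent) auto
  thus "a = a' \<and> b = b' \<and> c = c' \<and> d = d'" by simp
qed simp

lemma elem_add: "elem a b c d + elem a' b' c' d' = elem (a + a') (b + b') (c + c') (d + d')"
  unfolding elem_def by (simp add: of_rat_add algebra_simps)

lemma elem_uminus: "- elem a b c d = elem (-a) (-b) (-c) (-d)"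
  unfolding elem_def by (simp add: of_rat_minus algebra_simps)

lemma elem_mult: "elem a b c d * elem a' b' c' d' =
  elem (a * a' + of_int m * b * b' + of_int n * c * c' + of_int m * of_int n * d * d')
       (a * b' + b * a' + of_int n * (c * d' + d * c'))
       (a * c' + c * a' + of_int m * (b * d' + d * b'))
       (a * d' + d * a' + b * c' + c * b')"
proof -
  let ?M = "real_of_int m" and ?N = "real_of_int n"
  let ?a = "real_of_rat a" and ?b = "real_of_rat b" and ?c = "real_of_rat c" and ?d = "real_of_rat d"
  let ?a' = "real_of_rat a'" and ?b' = "real_of_rat b'" and ?c' = "real_of_rat c'" and ?d' = "real_of_rat d'"
  \<comment> \<open>the difference of the two sides is a combination of sqrt_m^2 - m and sqrt_n^2 - n\<close>
  have "elem a b c d * elem a' b' c' d'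
    - ((?a * ?a' + ?M * ?b * ?b' + ?N * ?c * ?c' + ?M * ?N * ?d * ?d')
     + (?a * ?b' + ?b * ?a' + ?N * (?c * ?d' + ?d * ?c')) * sqrt_m
     + (?a * ?c' + ?c * ?a' + ?M * (?b * ?d' + ?d * ?b')) * sqrt_n
     + (?a * ?d' + ?d * ?a' + ?b * ?c' + ?c * ?b') * (sqrt_m * sqrt_n))
    = (sqrt_m * sqrt_m - ?M) * (?b * ?b' + (?b * ?d' + ?d * ?b') * sqrt_n + ?d * ?d' * (sqrt_n * sqrt_n))
      + (sqrt_n * sqrt_n - ?N) * (?c * ?c' + (?c * ?d' + ?d * ?c') * sqrt_m + ?d * ?d' * ?M)"
    unfolding elem_def by (simp add: algebra_simps)
  also have "\<dots> = 0" using sqrt_m_square sqrt_n_square by simp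
  finally show ?thesis unfolding elem_def of_rat_add of_rat_mult of_rat_of_int_eq
    by (simp add: algebra_simps)
qed

lemma of_rat_eq_elem: "of_rat r = elem r 0 0 0"
  unfolding elem_def by simp

lemma K_add: "x \<in> K \<Longrightarrow> y \<in> K \<Longrightarrow> x + y \<in> K"
  by (auto elim!: K_elemE simp: elem_add elem_in_K)

lemma K_mult: "x \<in> K \<Longrightarrow> y \<in> K \<Longrightarrow> x * y \<in> K"
  by (auto elim!: K_elemE simp: elem_mult elem_in_K)

lemma K_of_rat: "of_rat r \<in> K"
  by (simp add: of_rat_eq_elem elem_in_K)

lemma Rats_subset_K: "\<rat> \<subseteq> K"
  using K_of_rat by (auto elim: Rats_cases)

lemma K_1: "1 \<in> K" and K_minus_1: "-1 \<in> K"
  using K_of_rat[of 1] K_of_rat[of "-1"] by simp_all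

lemma K_power: "x \<in> K \<Longrightarrow> x ^ k \<in> K"
  by (induction k) (auto intro: K_mult K_1)

lemma quad_field_m_eq: "of_rat a + of_rat b * sqrt (of_int m) = elem a b 0 0"
  unfolding elem_def sqrt_m_def by simp

lemma quad_field_n_eq: "of_rat a + of_rat b * sqrt (of_int n) = elem a 0 b 0"
  unfolding elem_def sqrt_n_def by simp

lemma quad_field_mn_eq: "of_rat a + of_rat b * sqrt (of_int (m * n)) = elem a 0 0 b"
  unfolding elem_def sqrt_mn by simp

lemma quad_fields_subset_K:
  "quad_field m \<subseteq> K" "quad_field n \<subseteq> K" "quad_field (m * n) \<subseteq> K"
  unfolding quad_field_def quad_field_m_eq quad_field_n_eq quad_field_mn_eq using elem_in_K by auto

definition flip :: "bool \<Rightarrow> rat \<Rightarrow> rat" where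
  "flip p b = (if p then - b else b)"

text \<open>emb p q negates sqrt m iff p and sqrt n iff q; it is 0 outside K, matching the
  normalisation in real_embeddings.\<close>
definition emb :: "bool \<Rightarrow> bool \<Rightarrow> real \<Rightarrow> real" where
  "emb p q x = (if x \<in> K then
     (THE y. \<exists>a b c d. x = elem a b c d \<and> y = elem a (flip p b) (flip q c) (flip (p \<noteq> q) d)) else 0)"

lemma emb_elem: "emb p q (elem a b c d) = elem a (flip p b) (flip q c) (flip (p \<noteq> q) d)"
  unfolding emb_def using elem_in_K by (auto simp: elem_eq_iff)

lemma emb_outside: "x \<notin> K \<Longrightarrow> emb p q x = 0"
  unfolding emb_def by simp

lemma emb_in_K: "x \<in> K \<Longrightarrow> emb p q x \<in> K"
  by (auto elim!: K_elemE simp: emb_elem elem_in_K)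

lemma emb_add: "x \<in> K \<Longrightarrow> y \<in> K \<Longrightarrow> emb p q (x + y) = emb p q x + emb p q y"
  by (auto elim!: K_elemE simp: emb_elem elem_add flip_def)

lemma emb_mult: "x \<in> K \<Longrightarrow> y \<in> K \<Longrightarrow> emb p q (x * y) = emb p q x * emb p q y"
  by (auto elim!: K_elemE simp: emb_elem elem_mult flip_def elem_eq_iff; simp add: algebra_simps)

lemma emb_of_rat: "emb p q (of_rat r) = of_rat r"
  by (simp add: of_rat_eq_elem emb_elem flip_def)

lemma emb_1: "emb p q 1 = 1" and emb_0: "emb p q 0 = 0"
  using emb_of_rat[of p q 1] emb_of_rat[of p q 0] by simp_all

lemma emb_uminus: "x \<in> K \<Longrightarrow> emb p q (- x) = - emb p q x"
  by (auto elim!: K_elemE simp: emb_elem elem_uminus flip_def)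

lemma emb_minus_1: "emb p q (-1) = -1"
  using emb_uminus[OF K_1] emb_1 by simp

lemma sign_in_K: "s \<in> {1, -1} \<Longrightarrow> s \<in> K"
  using K_1 K_minus_1 by auto

lemma emb_sign: "s \<in> {1, -1} \<Longrightarrow> emb p q s = s"
  using emb_1 emb_minus_1 by auto

lemma emb_emb: "x \<in> K \<Longrightarrow> emb p q (emb p' q' x) = emb (p \<noteq> p') (q \<noteq> q') x"
  by (auto elim!: K_elemE simp: emb_elem flip_def)

lemma emb_identity: "x \<in> K \<Longrightarrow> emb False False x = x"
  by (auto elim!: K_elemE simp: emb_elem flip_def)

lemma emb_nonzero: assumes "x \<in> K" "x \<noteq> 0" shows "emb p q x \<noteq> 0"
proof
  assume "emb p q x = 0"
  hence "emb p q (emb p q x) = 0" by (simp add: emb_0)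
  thus False using emb_emb[OF assms(1)] emb_identity[OF assms(1)] assms(2) by simp
qed

lemma emb_power: "x \<in> K \<Longrightarrow> emb p q (x ^ k) = emb p q x ^ k"
  by (induction k) (auto simp: emb_1 emb_mult K_power)

lemma emb_in_real_embeddings: "emb p q \<in> real_embeddings K"
  unfolding real_embeddings_def using emb_add emb_mult emb_1 emb_outside by blast

lemma sqrt_m_eq_elem: "sqrt_m = elem 0 1 0 0" and sqrt_n_eq_elem: "sqrt_n = elem 0 0 1 0"
  unfolding elem_def by simp_all

text \<open>An embedding fixes Q and sends each of sqrt m, sqrt n to plus or minus itself.\<close>
lemma real_embedding_eq_emb:
  assumes \<sigma>: "\<sigma> \<in> real_embeddings K"
  shows "\<exists>p q. \<sigma> = emb p q"
proof -
  have in_K: "sqrt_m \<in> K" "sqrt_n \<in> K" "sqrt_m * sqrt_n \<in> K"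
    using elem_in_K K_mult sqrt_m_eq_elem sqrt_n_eq_elem by simp_all
  have "\<sigma> sqrt_m = sqrt_m \<or> \<sigma> sqrt_m = - sqrt_m" "\<sigma> sqrt_n = sqrt_n \<or> \<sigma> sqrt_n = - sqrt_n"
    using real_embedding_sqrt_cases[OF \<sigma> Rats_subset_K, of _ "of_int _"] in_K sqrt_m_square sqrt_n_square
    by simp_all
  then obtain p q where p: "\<sigma> sqrt_m = (if p then - sqrt_m else sqrt_m)"
    and q: "\<sigma> sqrt_n = (if q then - sqrt_n else sqrt_n)"
    by (intro that[of "\<sigma> sqrt_m \<noteq> sqrt_m" "\<sigma> sqrt_n \<noteq> sqrt_n"]) auto
  have "\<sigma> x = emb p q x" for x
  proof (cases "x \<in> K")
    case False
    thus ?thesis using \<sigma> emb_outside unfolding real_embeddings_def by simp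
  next
    case True
    then obtain a b c d where x: "x = elem a b c d" by (rule K_elemE)
    note add = real_embedding_add[OF \<sigma>] and mult = real_embedding_mult[OF \<sigma>]
    note fix_rat = real_embedding_of_rat[OF \<sigma> Rats_subset_K]
    have "\<sigma> x = \<sigma> (of_rat a) + \<sigma> (of_rat b * sqrt_m) + \<sigma> (of_rat c * sqrt_n)
        + \<sigma> (of_rat d * (sqrt_m * sqrt_n))"
      unfolding x elem_def using in_K K_of_rat by (simp add: add K_add K_mult)
    also have "\<dots> = of_rat a + of_rat b * \<sigma> sqrt_m + of_rat c * \<sigma> sqrt_n + of_rat d * (\<sigma> sqrt_m * \<sigma> sqrt_n)"
      using in_K K_of_rat by (simp add: mult fix_rat)
    also have "\<dots> = emb p q x"
      unfolding x emb_elem p q by (simp add: elem_def flip_def of_rat_minus)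
    finally show ?thesis .
  qed
  thus ?thesis by blast
qed

lemma emb_quad_field_m: "x \<in> quad_field m \<Longrightarrow> emb p q x = (if p then quad_conj m x else x)"
proof -
  assume "x \<in> quad_field m"
  then obtain a b where x: "x = of_rat a + of_rat b * sqrt (of_int m)" unfolding quad_field_def by blast
  have "quad_conj m x = of_rat a - of_rat b * sqrt (of_int m)"
    unfolding x using m_pos m_nonsquare by (intro quad_conj_eq) auto
  thus ?thesis unfolding x quad_field_m_eq emb_elem by (simp add: flip_def elem_def sqrt_m_def of_rat_minus)
qed

lemma emb_quad_field_n: "x \<in> quad_field n \<Longrightarrow> emb p q x = (if q then quad_conj n x else x)"
proof -
  assume "x \<in> quad_field n"
  then obtain a b where x: "x = of_rat a + of_rat b * sqrt (of_int n)" unfolding quad_field_def by blast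
  have "quad_conj n x = of_rat a - of_rat b * sqrt (of_int n)"
    unfolding x using n_pos n_nonsquare by (intro quad_conj_eq) auto
  thus ?thesis unfolding x quad_field_n_eq emb_elem by (simp add: flip_def elem_def sqrt_n_def of_rat_minus)
qed

lemma emb_quad_field_mn: "x \<in> quad_field (m * n) \<Longrightarrow> emb p q x = (if p \<noteq> q then quad_conj (m * n) x else x)"
proof -
  assume "x \<in> quad_field (m * n)"
  then obtain a b where x: "x = of_rat a + of_rat b * sqrt (of_int (m * n))" unfolding quad_field_def by blast
  have "quad_conj (m * n) x = of_rat a - of_rat b * sqrt (of_int (m * n))"
    unfolding x using m_pos n_pos mn_nonsquare by (intro quad_conj_eq) auto
  thus ?thesis unfolding x quad_field_mn_eq emb_elem using sqrt_mn by (simp add: flip_def elem_def of_rat_minus)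
qed

lemma emb_poly:
  assumes "x \<in> K"
  shows "poly (of_int_poly P) x \<in> K \<and> emb p q (poly (of_int_poly P) x) = poly (of_int_poly P) (emb p q x)"
proof (induction P)
  case (pCons a P)
  have "of_int_poly (pCons a P) = pCons (of_int a :: real) (of_int_poly P)"
    by (rule Polynomial.map_poly_pCons) simp
  moreover have "of_int a \<in> K" "emb p q (of_int a) = of_int a"
    using K_of_rat[of "of_int a"] emb_of_rat[of p q "of_int a"] by simp_all
  ultimately show ?case using pCons.IH assms by (simp add: K_add K_mult emb_add emb_mult)
qed (simp add: K_of_rat[of 0, simplified] emb_0)

lemma algebraic_int_emb:
  assumes "x \<in> K" "algebraic_int x"
  shows "algebraic_int (emb p q x)"
proof -
  obtain P where "lead_coeff P = 1" "poly (of_int_poly P) x = 0"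
    using assms(2) unfolding algebraic_int_def by blast
  thus ?thesis using emb_poly[OF assms(1), of P p q] emb_0 unfolding algebraic_int_def by auto
qed

text \<open>emb False True, emb True False and emb True True fix sqrt m, sqrt n and sqrt (m n)
  respectively, so x times its image is the relative norm of x to that quadratic subfield.\<close>
lemma relnorm_in_quad_field_m: assumes "x \<in> K" shows "x * emb False True x \<in> quad_field m"
proof -
  obtain a b c d where x: "x = elem a b c d" using assms by (rule K_elemE)
  have "x * emb False True x = elem (a * a + of_int m * b * b - of_int n * c * c - of_int m * of_int n * d * d)
       (2 * a * b - 2 * of_int n * c * d) 0 0"
    unfolding x emb_elem elem_mult flip_def by (simp add: algebra_simps)
  thus ?thesis unfolding quad_field_def quad_field_m_eq by blast
qed

lemma relnorm_in_quad_field_n: assumes "x \<in> K" shows "x * emb True False x \<in> quad_field n"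
proof -
  obtain a b c d where x: "x = elem a b c d" using assms by (rule K_elemE)
  have "x * emb True False x = elem (a * a - of_int m * b * b + of_int n * c * c - of_int m * of_int n * d * d)
       0 (2 * a * c - 2 * of_int m * b * d) 0"
    unfolding x emb_elem elem_mult flip_def by (simp add: algebra_simps)
  thus ?thesis unfolding quad_field_def quad_field_n_eq by blast
qed

lemma relnorm_in_quad_field_mn: assumes "x \<in> K" shows "x * emb True True x \<in> quad_field (m * n)"
proof -
  obtain a b c d where x: "x = elem a b c d" using assms by (rule K_elemE)
  have "x * emb True True x = elem (a * a - of_int m * b * b - of_int n * c * c + of_int m * of_int n * d * d)
       0 0 (2 * a * d - 2 * b * c)"
    unfolding x emb_elem elem_mult flip_def by (simp add: algebra_simps)
  thus ?thesis unfolding quad_field_def quad_field_mn_eq by blast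
qed

definition absnorm :: "real \<Rightarrow> real" where
  "absnorm x = x * emb False True x * emb True False x * emb True True x"

lemma absnorm_eq_relnorm: assumes "x \<in> K"
  shows "absnorm x = (x * emb False True x) * emb True False (x * emb False True x)"
  using assms by (simp add: absnorm_def emb_mult emb_in_K emb_emb mult.assoc)

lemma absnorm_rational: assumes "x \<in> K" shows "absnorm x \<in> \<rat>"
proof -
  obtain a b where "x * emb False True x = of_rat a + of_rat b * sqrt (of_int m)"
    using relnorm_in_quad_field_m[OF assms] unfolding quad_field_def by blast
  hence "absnorm x = elem a b 0 0 * elem a (- b) 0 0"
    unfolding absnorm_eq_relnorm[OF assms] quad_field_m_eq by (simp add: emb_elem flip_def)
  also have "\<dots> = of_rat (a * a - of_int m * b * b)" unfolding elem_mult of_rat_eq_elem by simp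
  finally show ?thesis by simp
qed

lemma K_inverse: assumes "x \<in> K" "x \<noteq> 0" shows "inverse x \<in> K"
proof -
  let ?y = "emb False True x * emb True False x * emb True True x"
  have "absnorm x \<noteq> 0" unfolding absnorm_def using emb_nonzero[OF assms] assms(2) by simp
  moreover have "x * (?y * inverse (absnorm x)) = absnorm x * inverse (absnorm x)"
    unfolding absnorm_def by (simp only: mult.assoc)
  ultimately have "inverse x = ?y * inverse (absnorm x)" by (simp add: inverse_unique)
  moreover have "inverse (absnorm x) \<in> K"
    using absnorm_rational[OF assms(1)] Rats_subset_K by auto
  ultimately show ?thesis using assms(1) by (simp add: K_mult emb_in_K)
qed

lemma emb_inverse: "x \<in> K \<Longrightarrow> x \<noteq> 0 \<Longrightarrow> emb p q (inverse x) = inverse (emb p q x)"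
  using real_embedding_inverse[OF emb_in_real_embeddings] K_inverse by blast

lemma K_power_int: "x \<in> K \<Longrightarrow> x \<noteq> 0 \<Longrightarrow> x powi k \<in> K"
  unfolding power_int_def using K_power K_inverse by auto

lemma emb_power_int: assumes "x \<in> K" "x \<noteq> 0" shows "emb p q (x powi k) = emb p q x powi k"
  using assms by (simp add: power_int_def emb_power K_inverse emb_inverse)

abbreviation E :: "real set" where "E \<equiv> units_of K"

lemma E_mult: "u \<in> E \<Longrightarrow> v \<in> E \<Longrightarrow> u * v \<in> E"
  unfolding Defs.units_of_def algebraic_int_real_iff by (auto intro: K_mult algebraic_int_mult)

lemma E_inverse: "u \<in> E \<Longrightarrow> inverse u \<in> E"
  unfolding Defs.units_of_def by (auto intro: K_inverse)

lemma E_minus_1: "-1 \<in> E"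
  unfolding Defs.units_of_def algebraic_int_real_iff using K_minus_1 by simp

lemma E_power_int: "u \<in> E \<Longrightarrow> u powi k \<in> E"
proof -
  assume u: "u \<in> E"
  have "1 \<in> E" using E_mult[OF E_minus_1 E_minus_1] by simp
  hence power: "v ^ j \<in> E" if "v \<in> E" for v j using that by (induction j) (simp_all add: E_mult)
  show ?thesis unfolding power_int_def using u by (simp add: power E_inverse)
qed

lemma E_K: "u \<in> E \<Longrightarrow> u \<in> K" and E_nonzero: "u \<in> E \<Longrightarrow> u \<noteq> 0"
  unfolding Defs.units_of_def by auto

lemma E_emb: assumes "u \<in> E" shows "emb p q u \<in> E"
proof -
  have u: "u \<in> K" "u \<noteq> 0" "algebraic_int u" "algebraic_int (inverse u)"
    using assms unfolding Defs.units_of_def by auto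
  have "algebraic_int (inverse (emb p q u))"
    using algebraic_int_emb[OF K_inverse[OF u(1,2)] u(4)] emb_inverse[OF u(1,2)] by simp
  thus ?thesis unfolding Defs.units_of_def using u emb_in_K emb_nonzero algebraic_int_emb by auto
qed

lemma units_quad_fields_subset_E:
  "units_of (quad_field m) \<subseteq> E" "units_of (quad_field n) \<subseteq> E" "units_of (quad_field (m * n)) \<subseteq> E"
  using quad_fields_subset_K unfolding Defs.units_of_def by auto

lemma relnorm_unit:
  assumes "u \<in> E" "u * emb p q u \<in> quad_field k"
  shows "u * emb p q u \<in> units_of (quad_field k)"
  using assms E_mult[OF assms(1) E_emb[OF assms(1)]] unfolding Defs.units_of_def by auto

lemma gen4_subset_E: "a \<in> E \<Longrightarrow> b \<in> E \<Longrightarrow> c \<in> E \<Longrightarrow> d \<in> E \<Longrightarrow> gen4 a b c d \<subseteq> E"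
  unfolding gen4_def by (auto intro!: E_mult E_power_int)

lemma signature_mult:
  assumes "x \<in> K" "x \<noteq> 0" "y \<in> K" "y \<noteq> 0"
  shows "signature K (x * y) = signature K x + signature K y"
proof
  fix \<sigma>
  show "signature K (x * y) \<sigma> = (signature K x + signature K y) \<sigma>"
  proof (cases "\<sigma> \<in> real_embeddings K")
    case True
    have "\<sigma> x \<noteq> 0" "\<sigma> y \<noteq> 0" using real_embedding_nonzero[OF True] K_inverse assms by auto
    thus ?thesis using real_embedding_mult[OF True] assms
      by (simp add: signature_real_embedding[OF True] sign_bit_mult)
  qed (simp add: signature_outside)
qed

lemma signature_inverse:
  assumes "x \<in> K" "x \<noteq> 0"
  shows "signature K (inverse x) = signature K x"
proof
  fix \<sigma>
  show "signature K (inverse x) \<sigma> = signature K x \<sigma>"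
    using real_embedding_inverse[of \<sigma> K x] K_inverse assms
    by (cases "\<sigma> \<in> real_embeddings K") (simp_all add: signature_real_embedding signature_outside sign_bit_inverse)
qed

lemma signature_power_int:
  assumes "x \<in> K" "x \<noteq> 0"
  shows "signature K (x powi k) = (if even k then 0 else signature K x)"
proof -
  have power: "signature K (y ^ j) = (if even j then 0 else signature K y)" if "y \<in> K" "y \<noteq> 0" for y j
  proof (induction j)
    case 0
    have "signature K 1 \<sigma> = 0" for \<sigma>
      by (cases "\<sigma> \<in> real_embeddings K")
        (simp_all add: signature_real_embedding signature_outside real_embedding_1 sign_bit_def)
    thus ?case by (simp add: fun_eq_iff)
  next
    case (Suc j)
    thus ?case using signature_mult[OF that K_power[OF that(1)], of j] that by (auto simp: fun_eq_iff)
  qed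
  show ?thesis
    using power[OF assms] power[OF K_inverse[OF assms]] assms signature_inverse[OF assms]
    by (simp add: power_int_def even_nat_iff)
qed

lemma signature_emb: "signature K x (emb p q) = sign_bit (emb p q x)"
  using signature_real_embedding[OF emb_in_real_embeddings] .

lemma signature_totally_positive:
  assumes "\<And>p q. emb p q x > 0"
  shows "signature K x = 0"
proof
  fix \<sigma>
  show "signature K x \<sigma> = 0 \<sigma>"
  proof (cases "\<sigma> \<in> real_embeddings K")
    case True
    then obtain p q where "\<sigma> = emb p q" using real_embedding_eq_emb by blast
    thus ?thesis using assms[of p q] by (simp add: signature_emb sign_bit_def)
  qed (simp add: signature_outside)
qed

lemma signature_gen4_subset_span:
  assumes "a \<in> E" "b \<in> E" "c \<in> E" "d \<in> E"
  shows "signature K ` gen4 a b c d \<subseteq> f2.span {signature K a, signature K b, signature K c, signature K d}"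
proof
  fix v assume "v \<in> signature K ` gen4 a b c d"
  then obtain i j k l where v: "v = signature K (a powi i * b powi j * c powi k * d powi l)"
    unfolding gen4_def by blast
  have span: "signature K (x powi z) \<in> f2.span {signature K a, signature K b, signature K c, signature K d}"
    if "x \<in> {a, b, c, d}" for x z
  proof -
    have "x \<in> E" using that assms by auto
    thus ?thesis using that signature_power_int[OF E_K E_nonzero, of x z] by (auto intro: f2.span_base f2.span_zero)
  qed
  have "v = signature K (a powi i) + signature K (b powi j) + signature K (c powi k) + signature K (d powi l)"
    unfolding v using assms by (simp add: signature_mult E_K E_nonzero E_power_int E_mult)
  thus "v \<in> f2.span {signature K a, signature K b, signature K c, signature K d}"
    using span by (simp add: f2.span_add)
qed

lemma span_signature_gen4:
  assumes "a \<in> E" "b \<in> E" "c \<in> E" "d \<in> E"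
  shows "f2.span (signature K ` gen4 a b c d) = f2.span {signature K a, signature K b, signature K c, signature K d}"
  unfolding f2.span_eq using signature_gen4_subset_span[OF assms] gen4_generators
  by (auto intro: f2.span_base f2.span_zero)

end

section \<open>Units of the biquadratic field\<close>

locale biquadratic_units = biquadratic +
  fixes \<epsilon>1 \<epsilon>2 \<epsilon>3 :: real
  assumes fundamental: "fundamental_unit m \<epsilon>1" "fundamental_unit n \<epsilon>2" "fundamental_unit (m * n) \<epsilon>3"
    and norm_minus_1: "quad_norm m \<epsilon>1 = -1" "quad_norm n \<epsilon>2 = -1" "quad_norm (m * n) \<epsilon>3 = -1"
begin

definition \<eta> :: real where "\<eta> = sqrt (\<epsilon>1 * \<epsilon>2 * \<epsilon>3)"

lemma eps_units: "\<epsilon>1 \<in> units_of (quad_field m)" "\<epsilon>2 \<in> units_of (quad_field n)"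
    "\<epsilon>3 \<in> units_of (quad_field (m * n))"
  and eps_gt_1: "\<epsilon>1 > 1" "\<epsilon>2 > 1" "\<epsilon>3 > 1"
  and units_quad_fields: "units_of (quad_field m) = {s * \<epsilon>1 powi k | s k. s \<in> {1, -1}}"
    "units_of (quad_field n) = {s * \<epsilon>2 powi k | s k. s \<in> {1, -1}}"
    "units_of (quad_field (m * n)) = {s * \<epsilon>3 powi k | s k. s \<in> {1, -1}}"
  using fundamental unfolding fundamental_unit_def by auto

lemma eps_E: "\<epsilon>1 \<in> E" "\<epsilon>2 \<in> E" "\<epsilon>3 \<in> E"
  using eps_units units_quad_fields_subset_E by blast+

lemma eps_K: "\<epsilon>1 \<in> K" "\<epsilon>2 \<in> K" "\<epsilon>3 \<in> K"
  using eps_E E_K by auto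

lemma eps_pos: "\<epsilon>1 > 0" "\<epsilon>2 > 0" "\<epsilon>3 > 0" and eps_nonzero: "\<epsilon>1 \<noteq> 0" "\<epsilon>2 \<noteq> 0" "\<epsilon>3 \<noteq> 0"
  using eps_gt_1 by auto

lemma quad_conj_eps: "quad_conj m \<epsilon>1 = - inverse \<epsilon>1" "quad_conj n \<epsilon>2 = - inverse \<epsilon>2"
    "quad_conj (m * n) \<epsilon>3 = - inverse \<epsilon>3"
proof -
  have "y = - inverse x" if "x * y = -1" for x y :: real
    using inverse_unique[of x "- y"] that by simp
  thus "quad_conj m \<epsilon>1 = - inverse \<epsilon>1" "quad_conj n \<epsilon>2 = - inverse \<epsilon>2"
    "quad_conj (m * n) \<epsilon>3 = - inverse \<epsilon>3"
    using norm_minus_1 unfolding quad_norm_def by blast+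
qed

lemma emb_eps1: "emb p q \<epsilon>1 = (if p then - inverse \<epsilon>1 else \<epsilon>1)"
  using emb_quad_field_m eps_units(1) quad_conj_eps(1) unfolding Defs.units_of_def by simp

lemma emb_eps2: "emb p q \<epsilon>2 = (if q then - inverse \<epsilon>2 else \<epsilon>2)"
  using emb_quad_field_n eps_units(2) quad_conj_eps(2) unfolding Defs.units_of_def by simp

lemma emb_eps3: "emb p q \<epsilon>3 = (if p \<noteq> q then - inverse \<epsilon>3 else \<epsilon>3)"
  using emb_quad_field_mn eps_units(3) quad_conj_eps(3) unfolding Defs.units_of_def by simp

lemma emb_eps_monomial:
  "emb p q (\<epsilon>1 powi k1 * \<epsilon>2 powi k2 * \<epsilon>3 powi k3)
     = (-1) powi ((if p then k1 else 0) + (if q then k2 else 0) + (if p \<noteq> q then k3 else 0))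
       * ((if p then inverse \<epsilon>1 else \<epsilon>1) powi k1 * (if q then inverse \<epsilon>2 else \<epsilon>2) powi k2
          * (if p \<noteq> q then inverse \<epsilon>3 else \<epsilon>3) powi k3)"
proof -
  have flip_power: "(if b then - inverse e else e) powi k
      = (-1) powi (if b then k else 0) * (if b then inverse e else e) powi k" for b and e :: real and k
  proof (cases b)
    case True
    have "(- inverse e) powi k = ((-1) * inverse e) powi k" by simp
    thus ?thesis using True by (simp only: power_int_mult_distrib if_True)
  qed simp
  have "emb p q (\<epsilon>1 powi k1 * \<epsilon>2 powi k2 * \<epsilon>3 powi k3)
      = emb p q \<epsilon>1 powi k1 * emb p q \<epsilon>2 powi k2 * emb p q \<epsilon>3 powi k3"
    using emb_mult K_mult K_power_int eps_K eps_nonzero emb_power_int by simp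
  also have "\<dots> = (-1) powi ((if p then k1 else 0) + (if q then k2 else 0) + (if p \<noteq> q then k3 else 0))
       * ((if p then inverse \<epsilon>1 else \<epsilon>1) powi k1 * (if q then inverse \<epsilon>2 else \<epsilon>2) powi k2
          * (if p \<noteq> q then inverse \<epsilon>3 else \<epsilon>3) powi k3)"
    unfolding emb_eps1 emb_eps2 emb_eps3 flip_power by (simp add: power_int_add mult_ac)
  finally show ?thesis .
qed

lemma emb_eps_monomial_pos_iff:
  "emb p q (\<epsilon>1 powi k1 * \<epsilon>2 powi k2 * \<epsilon>3 powi k3) > 0
     \<longleftrightarrow> even ((if p then k1 else 0) + (if q then k2 else 0) + (if p \<noteq> q then k3 else 0))"
proof -
  define P where "P = (if p then inverse \<epsilon>1 else \<epsilon>1) powi k1 * (if q then inverse \<epsilon>2 else \<epsilon>2) powi k2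
          * (if p \<noteq> q then inverse \<epsilon>3 else \<epsilon>3) powi k3"
  have "P > 0" unfolding P_def using eps_pos by simp
  hence "0 < (-1) powi j * P \<longleftrightarrow> even j" for j
    by (simp add: zero_less_mult_iff power_int_minus_left)
  thus ?thesis unfolding emb_eps_monomial P_def .
qed

lemma relnorms_of_unit:
  assumes "u \<in> E"
  shows "\<exists>s k. s \<in> {1, -1} \<and> u * emb False True u = s * \<epsilon>1 powi k"
    and "\<exists>s k. s \<in> {1, -1} \<and> u * emb True False u = s * \<epsilon>2 powi k"
    and "\<exists>s k. s \<in> {1, -1} \<and> u * emb True True u = s * \<epsilon>3 powi k"
  using relnorm_unit[OF assms relnorm_in_quad_field_m[OF E_K[OF assms]]]
    relnorm_unit[OF assms relnorm_in_quad_field_n[OF E_K[OF assms]]]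
    relnorm_unit[OF assms relnorm_in_quad_field_mn[OF E_K[OF assms]]]
  unfolding units_quad_fields by blast+

lemma eps_monomial_in_K: "\<epsilon>1 powi k1 * \<epsilon>2 powi k2 * \<epsilon>3 powi k3 \<in> K"
  using eps_K eps_nonzero by (intro K_mult K_power_int)

lemma absnorm_unit:
  assumes u: "u \<in> E" and s: "s \<in> {1, -1}" and rel: "u * emb False True u = s * \<epsilon>1 powi k"
  shows "absnorm u = (-1) powi k"
proof -
  have "emb True False (s * \<epsilon>1 powi k) = s * (- inverse \<epsilon>1) powi k"
    using sign_in_K[OF s] emb_sign[OF s] eps_K(1) eps_nonzero(1)
    by (simp add: emb_mult K_power_int emb_power_int emb_eps1)
  hence "absnorm u = s * s * (\<epsilon>1 powi k * (- inverse \<epsilon>1) powi k)"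
    using absnorm_eq_relnorm[OF E_K[OF u]] rel by (simp add: mult_ac)
  also have "\<epsilon>1 powi k * (- inverse \<epsilon>1) powi k = (\<epsilon>1 * - inverse \<epsilon>1) powi k"
    by (simp only: power_int_mult_distrib)
  also have "\<epsilon>1 * - inverse \<epsilon>1 = -1" using eps_nonzero(1) by simp
  also have "s * s = 1" using s by auto
  finally show ?thesis by simp
qed

text \<open>The product of the three relative norms of u is u^2 times its absolute norm.\<close>
lemma unit_square:
  assumes u: "u \<in> E"
  obtains s k1 k2 k3 where "s \<in> {1, -1}" "u ^ 2 = s * (\<epsilon>1 powi k1 * \<epsilon>2 powi k2 * \<epsilon>3 powi k3)"
proof -
  obtain s1 k1 where 1: "s1 \<in> {1, -1}" "u * emb False True u = s1 * \<epsilon>1 powi k1"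
    using relnorms_of_unit(1)[OF u] by blast
  obtain s2 k2 where 2: "s2 \<in> {1, -1}" "u * emb True False u = s2 * \<epsilon>2 powi k2"
    using relnorms_of_unit(2)[OF u] by blast
  obtain s3 k3 where 3: "s3 \<in> {1, -1}" "u * emb True True u = s3 * \<epsilon>3 powi k3"
    using relnorms_of_unit(3)[OF u] by blast
  let ?M = "\<epsilon>1 powi k1 * \<epsilon>2 powi k2 * \<epsilon>3 powi k3"
  have "u ^ 2 * absnorm u = (u * emb False True u) * (u * emb True False u) * (u * emb True True u)"
    unfolding absnorm_def by (simp add: power2_eq_square mult_ac)
  hence "u ^ 2 * (-1) powi k1 = (s1 * s2 * s3) * ?M"
    unfolding absnorm_unit[OF u 1] 1(2) 2(2) 3(2) by (simp add: mult_ac)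
  hence "u ^ 2 = ((-1) powi k1 * s1 * s2 * s3) * ?M"
    using power_int_minus_one_mult_self[of k1]
    by (metis (no_types, lifting) mult.assoc mult.left_commute mult_1_right)
  moreover have "(-1) powi k1 * s1 * s2 * s3 \<in> {1, -1}"
    using 1(1) 2(1) 3(1) by (auto simp: power_int_minus_left)
  ultimately show ?thesis using that by blast
qed

text \<open>u^2 is totally positive; its signs at emb False False, emb True False and
  emb False True determine s and the parities of k1 + k3 and k2 + k3.\<close>
lemma unit_square_exponents:
  assumes u: "u \<in> E" and s: "s \<in> {1, -1}"
    and eq: "u ^ 2 = s * (\<epsilon>1 powi k1 * \<epsilon>2 powi k2 * \<epsilon>3 powi k3)"
  shows "s = 1" "even k1 \<longleftrightarrow> even k3" "even k2 \<longleftrightarrow> even k3"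
proof -
  have pos: "s * emb p q (\<epsilon>1 powi k1 * \<epsilon>2 powi k2 * \<epsilon>3 powi k3) > 0" for p q
  proof -
    have "emb p q (u ^ 2) > 0"
      using emb_power[OF E_K[OF u]] emb_nonzero[OF E_K[OF u] E_nonzero[OF u]] by simp
    thus ?thesis
      unfolding eq emb_mult[OF sign_in_K[OF s] eps_monomial_in_K] emb_sign[OF s] .
  qed
  have "emb False False (\<epsilon>1 powi k1 * \<epsilon>2 powi k2 * \<epsilon>3 powi k3) > 0"
    unfolding emb_eps_monomial_pos_iff by simp
  thus s1: "s = 1" using pos[of False False] s by (auto simp: zero_less_mult_iff)
  show "even k1 \<longleftrightarrow> even k3" using pos[of True False] s1 emb_eps_monomial_pos_iff[of True False] by simp
  show "even k2 \<longleftrightarrow> even k3" using pos[of False True] s1 emb_eps_monomial_pos_iff[of False True] by simp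
qed

lemma eta_pos: "\<eta> > 0" and eta_square: "\<eta> ^ 2 = \<epsilon>1 * \<epsilon>2 * \<epsilon>3"
  unfolding \<eta>_def using eps_pos by simp_all

lemma eta_E: assumes "\<eta> \<in> K" shows "\<eta> \<in> E"
proof -
  have "Polynomial.algebraic_int (\<epsilon>1 * \<epsilon>2 * \<epsilon>3)"
    and "Polynomial.algebraic_int (inverse (\<epsilon>1 * \<epsilon>2 * \<epsilon>3))"
    using E_mult[OF E_mult[OF eps_E(1,2)] eps_E(3)] unfolding Defs.units_of_def algebraic_int_real_iff by auto
  hence "Polynomial.algebraic_int \<eta>" "Polynomial.algebraic_int (inverse \<eta>)"
    unfolding \<eta>_def real_sqrt_inverse[symmetric] by (auto intro: algebraic_int_sqrt)
  thus ?thesis unfolding Defs.units_of_def algebraic_int_real_iff using assms eta_pos by simp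
qed

lemma gen4_eps3_subset_gen4_eta: "gen4 (-1) \<epsilon>1 \<epsilon>2 \<epsilon>3 \<subseteq> gen4 (-1) \<epsilon>1 \<epsilon>2 \<eta>"
proof
  fix x assume "x \<in> gen4 (-1) \<epsilon>1 \<epsilon>2 \<epsilon>3"
  then obtain i j k l where x: "x = (-1) powi i * \<epsilon>1 powi j * \<epsilon>2 powi k * \<epsilon>3 powi l"
    unfolding gen4_def by blast
  have eps3: "\<epsilon>3 = \<epsilon>1 powi (-1) * \<epsilon>2 powi (-1) * \<eta> powi 2"
    using eta_square eps_nonzero by (simp add: power_int_minus field_simps)
  \<comment> \<open>not by rewriting with eps3: the locale constant \<eta> has \<epsilon>3 as a parameter\<close>
  have "\<epsilon>3 powi l = (\<epsilon>1 powi (-1) * \<epsilon>2 powi (-1) * \<eta> powi 2) powi l"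
    by (rule arg_cong[where f = "\<lambda>z. z powi l", OF eps3])
  also have "\<dots> = \<epsilon>1 powi (- l) * \<epsilon>2 powi (- l) * \<eta> powi (2 * l)"
    unfolding power_int_mult_distrib power_int_mult[symmetric] by simp
  finally have eps3_power: "\<epsilon>3 powi l = \<epsilon>1 powi (- l) * \<epsilon>2 powi (- l) * \<eta> powi (2 * l)" .
  have split: "\<epsilon>1 powi (j - l) = \<epsilon>1 powi j * \<epsilon>1 powi (- l)" "\<epsilon>2 powi (k - l) = \<epsilon>2 powi k * \<epsilon>2 powi (- l)"
    using power_int_add[of \<epsilon>1 j "- l"] power_int_add[of \<epsilon>2 k "- l"] eps_nonzero by simp_all
  have "x = (-1) powi i * \<epsilon>1 powi (j - l) * \<epsilon>2 powi (k - l) * \<eta> powi (2 * l)"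
    unfolding x eps3_power split by (simp only: mult_ac)
  thus "x \<in> gen4 (-1) \<epsilon>1 \<epsilon>2 \<eta>" by (simp add: gen4_memI)
qed

text \<open>Write u^2 = e1^k1 e2^k2 e3^k3 with all k_i of the same parity. If they are even, u is
  plus or minus a monomial; if they are odd, u / (plus or minus a monomial) squares to e1 e2 e3,
  so eta lies in K.\<close>
lemma unit_cases:
  assumes u: "u \<in> E"
  shows "u \<in> gen4 (-1) \<epsilon>1 \<epsilon>2 \<epsilon>3 \<or> \<eta> \<in> K \<and> u * inverse \<eta> \<in> gen4 (-1) \<epsilon>1 \<epsilon>2 \<epsilon>3"
proof -
  obtain s k1 k2 k3 where s: "s \<in> {1, -1}" and eq: "u ^ 2 = s * (\<epsilon>1 powi k1 * \<epsilon>2 powi k2 * \<epsilon>3 powi k3)"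
    using unit_square[OF u] by blast
  note parity = unit_square_exponents[OF u s eq]
  have signed_monomial: "x \<in> gen4 (-1) \<epsilon>1 \<epsilon>2 \<epsilon>3"
    if "x = \<epsilon>1 powi a1 * \<epsilon>2 powi a2 * \<epsilon>3 powi a3 \<or> x = - (\<epsilon>1 powi a1 * \<epsilon>2 powi a2 * \<epsilon>3 powi a3)"
    for x a1 a2 a3
    using that gen4_memI[of "-1" 0 \<epsilon>1 a1 \<epsilon>2 a2 \<epsilon>3 a3] gen4_memI[of "-1" 1 \<epsilon>1 a1 \<epsilon>2 a2 \<epsilon>3 a3]
    by auto
  show ?thesis
  proof (cases "even k3")
    case True
    then obtain a1 a2 a3 where "k1 = 2 * a1" "k2 = 2 * a2" "k3 = 2 * a3" using parity by (meson evenE)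
    hence "u ^ 2 = (\<epsilon>1 powi a1 * \<epsilon>2 powi a2 * \<epsilon>3 powi a3) ^ 2"
      using eq parity(1) by (simp add: power_int_double power_mult_distrib)
    hence "u \<in> gen4 (-1) \<epsilon>1 \<epsilon>2 \<epsilon>3" by (intro signed_monomial) (simp add: power2_eq_iff)
    thus ?thesis ..
  next
    case False
    then obtain a1 a2 a3 where k: "k1 = 2 * a1 + 1" "k2 = 2 * a2 + 1" "k3 = 2 * a3 + 1"
      using parity by (meson oddE)
    have "u ^ 2 = (\<epsilon>1 * (\<epsilon>1 powi a1) ^ 2) * (\<epsilon>2 * (\<epsilon>2 powi a2) ^ 2) * (\<epsilon>3 * (\<epsilon>3 powi a3) ^ 2)"
      using eq parity(1) eps_nonzero unfolding k by (simp add: power_int_double_plus_1)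
    also have "\<dots> = \<eta> ^ 2 * (\<epsilon>1 powi a1 * \<epsilon>2 powi a2 * \<epsilon>3 powi a3) ^ 2"
      unfolding eta_square by (simp add: power_mult_distrib mult_ac)
    finally have "u ^ 2 = \<eta> ^ 2 * (\<epsilon>1 powi a1 * \<epsilon>2 powi a2 * \<epsilon>3 powi a3) ^ 2" .
    hence "(u * inverse \<eta>) ^ 2 = (\<epsilon>1 powi a1 * \<epsilon>2 powi a2 * \<epsilon>3 powi a3) ^ 2"
      using eta_pos by (simp add: power_mult_distrib power_inverse)
    then obtain w where w: "u * inverse \<eta> = w" "w \<in> gen4 (-1) \<epsilon>1 \<epsilon>2 \<epsilon>3"
      using signed_monomial by (auto simp: power2_eq_iff)
    have "w \<in> E" using w(2) gen4_subset_E[OF E_minus_1 eps_E] by blast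
    moreover have "\<eta> = u * inverse w" using w(1) eta_pos E_nonzero[OF u] by (auto simp: field_simps)
    ultimately have "\<eta> \<in> K" using E_K[OF E_mult[OF u E_inverse]] by simp
    thus ?thesis using w by blast
  qed
qed

lemma units_eq_gen4_eps3: "\<eta> \<notin> K \<Longrightarrow> E = gen4 (-1) \<epsilon>1 \<epsilon>2 \<epsilon>3"
  using unit_cases gen4_subset_E[OF E_minus_1 eps_E] by blast

lemma units_eq_gen4_eta:
  assumes "\<eta> \<in> K"
  shows "E = gen4 (-1) \<epsilon>1 \<epsilon>2 \<eta>"
proof
  show "gen4 (-1) \<epsilon>1 \<epsilon>2 \<eta> \<subseteq> E" using gen4_subset_E[OF E_minus_1 eps_E(1,2) eta_E[OF assms]] .
  show "E \<subseteq> gen4 (-1) \<epsilon>1 \<epsilon>2 \<eta>"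
  proof
    fix u assume u: "u \<in> E"
    have nonzero: "(-1::real) \<noteq> 0" "\<epsilon>1 \<noteq> 0" "\<epsilon>2 \<noteq> 0" "\<eta> \<noteq> 0" using eps_nonzero eta_pos by auto
    from unit_cases[OF u] show "u \<in> gen4 (-1) \<epsilon>1 \<epsilon>2 \<eta>"
    proof
      assume "\<eta> \<in> K \<and> u * inverse \<eta> \<in> gen4 (-1) \<epsilon>1 \<epsilon>2 \<epsilon>3"
      hence "u * inverse \<eta> \<in> gen4 (-1) \<epsilon>1 \<epsilon>2 \<eta>" using gen4_eps3_subset_gen4_eta by blast
      hence "u * inverse \<eta> * \<eta> \<in> gen4 (-1) \<epsilon>1 \<epsilon>2 \<eta>"
        using gen4_generators(4) by (rule gen4_mult[OF nonzero])
      thus ?thesis using nonzero(4) by (simp add: mult.assoc)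
    qed (use gen4_eps3_subset_gen4_eta in blast)
  qed
qed

lemma signature_minus_1_emb: "signature K (-1) (emb p q) = 1"
  unfolding signature_emb emb_minus_1 sign_bit_def by simp

lemma signature_eps1_emb: "signature K \<epsilon>1 (emb p q) = (if p then 1 else 0)"
  unfolding signature_emb emb_eps1 sign_bit_def using eps_pos by simp

lemma signature_eps2_emb: "signature K \<epsilon>2 (emb p q) = (if q then 1 else 0)"
  unfolding signature_emb emb_eps2 sign_bit_def using eps_pos by simp

text \<open>e1 e2 e3 is totally positive: at every embedding an even number of the e_i change sign.\<close>
lemma signature_eps3: "signature K \<epsilon>3 = signature K \<epsilon>1 + signature K \<epsilon>2"
proof -
  have in_K: "\<epsilon>1 * \<epsilon>2 \<in> K" "\<epsilon>1 * \<epsilon>2 \<noteq> 0" using eps_K eps_nonzero K_mult by auto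
  have "emb p q (\<epsilon>1 * \<epsilon>2 * \<epsilon>3) > 0" for p q
    using emb_eps_monomial_pos_iff[of p q 1 1 1] by simp
  hence "signature K (\<epsilon>1 * \<epsilon>2 * \<epsilon>3) = 0" by (rule signature_totally_positive)
  hence "signature K \<epsilon>1 + signature K \<epsilon>2 + signature K \<epsilon>3 = 0"
    using eps_K eps_nonzero in_K by (simp add: signature_mult)
  hence "signature K \<epsilon>3 + (signature K \<epsilon>1 + signature K \<epsilon>2) = 0" by (simp only: ac_simps)
  hence "signature K \<epsilon>3 = - (signature K \<epsilon>1 + signature K \<epsilon>2)" by (rule eq_neg_iff_add_eq_0[THEN iffD2])
  thus ?thesis by (simp add: fun_eq_iff)
qed

lemma absnorm_eta:
  assumes "\<eta> \<in> K"
  shows "absnorm \<eta> = -1"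
proof -
  let ?r = "\<eta> * emb False True \<eta>"
  have "emb False True \<eta> ^ 2 = emb False True (\<eta> ^ 2)" using emb_power[OF assms] by simp
  also have "\<dots> = emb False True (\<epsilon>1 * \<epsilon>2 * \<epsilon>3)" unfolding eta_square ..
  also have "\<dots> = \<epsilon>1 * inverse \<epsilon>2 * inverse \<epsilon>3"
    using eps_K by (simp add: emb_mult K_mult emb_eps1 emb_eps2 emb_eps3)
  finally have emb_eta_square: "emb False True \<eta> ^ 2 = \<epsilon>1 * inverse \<epsilon>2 * inverse \<epsilon>3" .
  have "?r ^ 2 = \<eta> ^ 2 * emb False True \<eta> ^ 2" by (simp add: power_mult_distrib)
  also have "\<dots> = (\<epsilon>1 * \<epsilon>2 * \<epsilon>3) * (\<epsilon>1 * inverse \<epsilon>2 * inverse \<epsilon>3)"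
    unfolding eta_square emb_eta_square ..
  also have "\<dots> = \<epsilon>1 ^ 2" using eps_nonzero by (simp add: field_simps power2_eq_square)
  finally have "?r ^ 2 = \<epsilon>1 ^ 2" .
  hence "?r = \<epsilon>1 \<or> ?r = - \<epsilon>1" by (simp add: power2_eq_iff)
  thus ?thesis
    using absnorm_eq_relnorm[OF assms] eps_K(1) eps_nonzero(1) by (auto simp: emb_eps1 emb_uminus)
qed

lemma signature_eta_sum:
  assumes "\<eta> \<in> K"
  shows "(\<Sum>\<sigma>\<leftarrow>[emb False False, emb False True, emb True False, emb True True]. signature K \<eta> \<sigma>) = 1"
proof -
  have nonzero: "emb p q \<eta> \<noteq> 0" for p q using emb_nonzero[OF assms] eta_pos by simp
  have "1 = sign_bit (absnorm \<eta>)" using absnorm_eta[OF assms] by (simp add: sign_bit_def)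
  also have "\<dots> = sign_bit \<eta> + sign_bit (emb False True \<eta>) + sign_bit (emb True False \<eta>)
      + sign_bit (emb True True \<eta>)"
    unfolding absnorm_def using nonzero eta_pos by (intro sign_bit_mult4) auto
  also have "\<dots> = (\<Sum>\<sigma>\<leftarrow>[emb False False, emb False True, emb True False, emb True True]. signature K \<eta> \<sigma>)"
    by (simp only: list.map signature_emb emb_identity[OF assms] sum_list.Cons sum_list.Nil add_0_right add.assoc)
  finally show ?thesis ..
qed

lemma signature_independent: "f2.independent {signature K (-1), signature K \<epsilon>1, signature K \<epsilon>2}"
  and signature_card: "card {signature K (-1), signature K \<epsilon>1, signature K \<epsilon>2} = 3"
proof -
  have differ: "f \<noteq> g" if "f \<sigma> \<noteq> g \<sigma>" for f g :: "(real \<Rightarrow> real) \<Rightarrow> bit" and \<sigma>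
    using that by auto
  note sign_values = signature_minus_1_emb signature_eps1_emb signature_eps2_emb
  have distinct: "signature K \<epsilon>1 \<noteq> signature K \<epsilon>2" "signature K (-1) \<noteq> signature K \<epsilon>1"
    "signature K (-1) \<noteq> signature K \<epsilon>2"
    by (rule differ[where \<sigma> = "emb True False"], simp add: sign_values)
      (rule differ[where \<sigma> = "emb False False"], simp add: sign_values)+
  have "signature K \<epsilon>2 \<noteq> 0" using signature_eps2_emb[of False True] by auto
  hence "f2.independent {signature K \<epsilon>2}" by (simp add: f2.independent_insert)
  moreover have "signature K \<epsilon>1 \<notin> f2.span {signature K \<epsilon>2}"
  proof
    assume "signature K \<epsilon>1 \<in> f2.span {signature K \<epsilon>2}"
    hence "(\<Sum>\<sigma>\<leftarrow>[emb False False, emb True False]. signature K \<epsilon>1 \<sigma>) = 0"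
      by (rule f2_span_eval_sum_eq_0) (simp add: signature_eps2_emb)
    thus False by (simp add: signature_eps1_emb)
  qed
  ultimately have "f2.independent {signature K \<epsilon>1, signature K \<epsilon>2}"
    using distinct by (simp add: f2.independent_insert)
  moreover have "signature K (-1) \<notin> f2.span {signature K \<epsilon>1, signature K \<epsilon>2}"
  proof
    assume "signature K (-1) \<in> f2.span {signature K \<epsilon>1, signature K \<epsilon>2}"
    hence "(\<Sum>\<sigma>\<leftarrow>[emb False False]. signature K (-1) \<sigma>) = 0"
      by (rule f2_span_eval_sum_eq_0) (auto simp: signature_eps1_emb signature_eps2_emb)
    thus False by (simp add: signature_minus_1_emb)
  qed
  ultimately show "f2.independent {signature K (-1), signature K \<epsilon>1, signature K \<epsilon>2}"
    using distinct by (simp add: f2.independent_insert)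
  show "card {signature K (-1), signature K \<epsilon>1, signature K \<epsilon>2} = 3" using distinct by simp
qed

text \<open>Summing over all four embeddings kills the signatures of -1, e1 and e2 but not that of
  eta, whose norm is -1.\<close>
lemma signature_eta_not_in_span:
  assumes "\<eta> \<in> K"
  shows "signature K \<eta> \<notin> f2.span {signature K (-1), signature K \<epsilon>1, signature K \<epsilon>2}"
proof
  assume "signature K \<eta> \<in> f2.span {signature K (-1), signature K \<epsilon>1, signature K \<epsilon>2}"
  hence "(\<Sum>\<sigma>\<leftarrow>[emb False False, emb False True, emb True False, emb True True]. signature K \<eta> \<sigma>) = 0"
    by (rule f2_span_eval_sum_eq_0)
      (auto simp: signature_minus_1_emb signature_eps1_emb signature_eps2_emb)
  thus False using signature_eta_sum[OF assms] by simp
qed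

lemma signature_rank_gen4_eps3: "f2.dim (signature K ` gen4 (-1) \<epsilon>1 \<epsilon>2 \<epsilon>3) = 3"
proof -
  let ?B = "{signature K (-1), signature K \<epsilon>1, signature K \<epsilon>2}"
  have "signature K \<epsilon>3 \<in> f2.span ?B"
    unfolding signature_eps3 by (rule f2.span_add; rule f2.span_base; simp)
  moreover have "{signature K (-1), signature K \<epsilon>1, signature K \<epsilon>2, signature K \<epsilon>3}
      = insert (signature K \<epsilon>3) ?B" by blast
  ultimately have "f2.span (signature K ` gen4 (-1) \<epsilon>1 \<epsilon>2 \<epsilon>3) = f2.span ?B"
    unfolding span_signature_gen4[OF E_minus_1 eps_E] by (simp only: f2.span_redundant)
  hence "f2.dim (signature K ` gen4 (-1) \<epsilon>1 \<epsilon>2 \<epsilon>3) = f2.dim ?B" by (rule f2_dim_eq_if_span_eq)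
  thus ?thesis using f2.dim_eq_card_independent[OF signature_independent] signature_card by simp
qed

lemma signature_rank_gen4_eta:
  assumes "\<eta> \<in> K"
  shows "f2.dim (signature K ` gen4 (-1) \<epsilon>1 \<epsilon>2 \<eta>) = 4"
proof -
  let ?B3 = "{signature K (-1), signature K \<epsilon>1, signature K \<epsilon>2}"
  let ?B = "{signature K (-1), signature K \<epsilon>1, signature K \<epsilon>2, signature K \<eta>}"
  have B: "?B = insert (signature K \<eta>) ?B3" by blast
  have new: "signature K \<eta> \<notin> f2.span ?B3" by (rule signature_eta_not_in_span[OF assms])
  hence "signature K \<eta> \<notin> ?B3" using f2.span_base[of "signature K \<eta>" ?B3] by blast
  hence "card ?B = 4" unfolding B using signature_card by simp
  moreover have "f2.independent ?B"
    unfolding B using new signature_independent by (rule f2.independent_insertI)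
  hence "f2.dim ?B = card ?B" by (rule f2.dim_eq_card_independent)
  moreover have "f2.dim (signature K ` gen4 (-1) \<epsilon>1 \<epsilon>2 \<eta>) = f2.dim ?B"
    using span_signature_gen4[OF E_minus_1 eps_E(1,2) eta_E[OF assms]] by (rule f2_dim_eq_if_span_eq)
  ultimately show ?thesis by simp
qed

lemma unit_group_signature_rank:
  "(E = gen4 (-1) \<epsilon>1 \<epsilon>2 \<epsilon>3 \<longleftrightarrow> unit_signature_rank K = 3)
   \<and> (E = gen4 (-1) \<epsilon>1 \<epsilon>2 \<eta> \<longleftrightarrow> unit_signature_rank K = 4)"
proof (cases "\<eta> \<in> K")
  case False
  hence "E \<noteq> gen4 (-1) \<epsilon>1 \<epsilon>2 \<eta>" using gen4_generators(4) E_K by blast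
  thus ?thesis using units_eq_gen4_eps3[OF False] signature_rank_gen4_eps3
    unfolding unit_signature_rank_def by simp
next
  case True
  hence "E \<noteq> gen4 (-1) \<epsilon>1 \<epsilon>2 \<epsilon>3"
    using units_eq_gen4_eta signature_rank_gen4_eps3 signature_rank_gen4_eta by force
  thus ?thesis using units_eq_gen4_eta[OF True] signature_rank_gen4_eta[OF True]
    unfolding unit_signature_rank_def by simp
qed

end

theorem proposition4p1:
  fixes m n :: int and \<epsilon>1 \<epsilon>2 \<epsilon>3 :: real
  assumes "real_biquadratic m n"
    and "fundamental_unit m \<epsilon>1" and "fundamental_unit n \<epsilon>2" and "fundamental_unit (m * n) \<epsilon>3"
    and "quad_norm m \<epsilon>1 = -1" and "quad_norm n \<epsilon>2 = -1" and "quad_norm (m * n) \<epsilon>3 = -1"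
  shows "(units_of (biquad_field m n) = gen4 (-1) \<epsilon>1 \<epsilon>2 \<epsilon>3
            \<longleftrightarrow> unit_signature_rank (biquad_field m n) = 3)
       \<and> (units_of (biquad_field m n) = gen4 (-1) \<epsilon>1 \<epsilon>2 (sqrt (\<epsilon>1 * \<epsilon>2 * \<epsilon>3))
            \<longleftrightarrow> unit_signature_rank (biquad_field m n) = 4)"
proof -
  interpret biquadratic_units m n \<epsilon>1 \<epsilon>2 \<epsilon>3
    using assms by unfold_locales (simp_all add: biquadratic_def)
  show ?thesis using unit_group_signature_rank unfolding \<eta>_def .
qed

end
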